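(* For every integer $n\ge0$, the number $e_n$ of walks $0=y_0,y_1,\dots,y_n=0$ with $y_i-y_{i-1}\in\{-2,-1,+1,+2\}$ for all $i$ and $y_i\ge0$ for all $i$ (basketball excursions of length $n$) is $$e_n=\frac{1}{n+1}\sum_{k=0}^{n}(-1)^{n+k}\binom{2n+2}{n-k}\binom{n+2k+1}{k}=\frac1{n+1}\sum_{i=0}^{\lfloor n/2\rfloor}\binom{2n+2}{i}\binom{n-i-1}{n-2i}.$$
   Context: For integers $a$ and $b$, $\binom ab=a(a-1)\cdots(a-b+1)/b!$ if $b\ge0$ (so $\binom{-1}{0}=1$) and $\binom ab=0$ if $b<0$. *)

theory Defs
  imports Complex_Main
begin

definition ibinom :: "int \<Rightarrow> int \<Rightarrow> real" where
  "ibinom a b = (if b < 0 then 0 else (real_of_int a) gchoose (nat b))"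

(* Basketball excursions of length n: walks y_0,...,y_n (y : nat => int)
   with y_0 = 0, y_n = 0, steps in {-2,-1,1,2}, and y_i >= 0.
   A walk is determined by its values on {0..n}; we identify it with the
   list [y_0, ..., y_n]. *)
definition basketball_excursions :: "nat \<Rightarrow> int list set" where
  "basketball_excursions n = {ys. length ys = n + 1 \<and> ys ! 0 = 0 \<and> ys ! n = 0
      \<and> (\<forall>i\<in>{1..n}. ys ! i - ys ! (i - 1) \<in> {-2, -1, 1, 2})
      \<and> (\<forall>i\<le>n. ys ! i \<ge> 0)}"

end

theory Submission
  imports Defs "HOL-Computational_Algebra.Formal_Power_Series"
begin

unbundle fps_syntax

text \<open>Splitting a nonnegative walk at its first visit to \<open>0\<close> gives a system of equations for
  the generating functions of nonnegative walks, from which the excursion series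
  \<open>Y = x E(x)\<close> satisfies \<open>Y (1 - Y)\<^sup>2 = x (1 - Y + Y\<^sup>2)\<^sup>2\<close>, i.e. \<open>Y = x \<psi>(Y)\<^sup>2\<close> with
  \<open>\<psi>(y) = 1 + y\<^sup>2 / (1 - y)\<close>. Lagrange inversion gives \<open>(n + 1) e\<^sub>n = [y\<^sup>n] \<psi>(y)\<^bsup>2n+2\<^esup>\<close>,
  which expands binomially into the second formula.

  For the first formula write \<open>Y = B(Z)\<close>, where \<open>B = x C(x)\<close> is the compositional inverse of
  \<open>y - y\<^sup>2\<close> (\<open>C\<close> the Catalan series) and \<open>Z = Y - Y\<^sup>2\<close>. Then \<open>Z = x (1 - Z)\<^sup>2 / (1 - B(Z))\<close>, and
  Lagrange-Buermann inversion applied to \<open>B(Z)\<close> gives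
  \<open>(n + 1) e\<^sub>n = [z\<^sup>n] (1 - z)\<^bsup>2n+2\<^esup> B'(z) (1 - B(z))\<^bsup>-(n+1)\<^esup>\<close>; the last factor has coefficients
  \<open>binom(n + 2k + 1, k)\<close>, once more by Lagrange inversion, now for \<open>B\<close> itself.\<close>

section \<open>Lagrange inversion for formal power series\<close>

lemma fps_compose_mult_nth:
  fixes A R Q :: "'a::comm_ring_1 fps"
  assumes "R $ 0 = 0"
  shows "((A oo R) * Q) $ n = (\<Sum>i=0..n. A $ i * (R ^ i * Q) $ n)"
proof -
  have "(A oo R) $ j = (\<Sum>i=0..n. A $ i * (R ^ i) $ j)" if "j \<le> n" for j
    unfolding fps_compose_nth
    by (rule sum.mono_neutral_left) (use that startsby_zero_power_prefix[OF assms] in auto)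
  then have "((A oo R) * Q) $ n = (\<Sum>j=0..n. \<Sum>i=0..n. A $ i * (R ^ i) $ j * Q $ (n - j))"
    by (simp add: fps_mult_nth sum_distrib_right)
  also have "\<dots> = (\<Sum>i=0..n. A $ i * (R ^ i * Q) $ n)"
    by (subst sum.swap) (simp add: fps_mult_nth sum_distrib_left mult.assoc)
  finally show ?thesis .
qed

lemma fps_X_mult_deriv_nth: "(fps_X * fps_deriv f) $ n = of_nat n * f $ n"
  by (cases n) (simp_all add: fps_X_mult_nth)

text \<open>For \<open>R = X / \<phi>\<close> the coefficient below is the residue of \<open>R' / R^(j+1)\<close>, which vanishes
  for \<open>j > 0\<close> because then \<open>R' / R^(j+1)\<close> is the derivative of \<open>-R^(-j) / j\<close>.\<close>
lemma fps_residue_deriv_div_power: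
  fixes R \<phi> :: "'a::field_char_0 fps"
  assumes R\<phi>: "R * \<phi> = fps_X" and \<phi>0: "\<phi> $ 0 \<noteq> 0"
  shows "(fps_deriv R * \<phi> ^ Suc j) $ j = (if j = 0 then 1 else 0)"
proof -
  have "fps_deriv R * \<phi> + R * fps_deriv \<phi> = 1"
    using arg_cong[OF R\<phi>, of fps_deriv] by (simp add: algebra_simps)
  then have d: "fps_deriv R * \<phi> = 1 - R * fps_deriv \<phi>"
    by (simp add: eq_diff_eq)
  have "fps_deriv R * \<phi> ^ Suc j = \<phi> ^ j * (fps_deriv R * \<phi>)"
    by (simp only: power_Suc2 mult_ac)
  also have "\<dots> = \<phi> ^ j - \<phi> ^ j * R * fps_deriv \<phi>"
    by (simp add: d right_diff_distrib mult.assoc)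
  finally have split: "fps_deriv R * \<phi> ^ Suc j = \<phi> ^ j - \<phi> ^ j * R * fps_deriv \<phi>" .
  show ?thesis
  proof (cases j)
    case 0
    have "R $ 0 * \<phi> $ 0 = 0"
      using arg_cong[OF R\<phi>, of "\<lambda>f. f $ 0"] by simp
    with \<phi>0 0 split show ?thesis by simp
  next
    case (Suc i)
    have "\<phi> ^ j * R = fps_X * \<phi> ^ i"
      using R\<phi> by (simp add: Suc mult_ac)
    moreover have "fps_deriv (\<phi> ^ j) = fps_const (of_nat j) * fps_deriv \<phi> * \<phi> ^ i"
      by (simp only: Suc fps_deriv_power diff_Suc_1)
    ultimately have key: "of_nat j * (\<phi> ^ j * R * fps_deriv \<phi>) = fps_X * fps_deriv (\<phi> ^ j)"
      by (simp add: fps_of_nat mult_ac)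
    have "of_nat j * (fps_deriv R * \<phi> ^ Suc j) = of_nat j * \<phi> ^ j - fps_X * fps_deriv (\<phi> ^ j)"
      unfolding split right_diff_distrib by (simp only: key)
    then have "(of_nat j * (fps_deriv R * \<phi> ^ Suc j)) $ j = 0"
      by (simp only: fps_sub_nth fps_X_mult_deriv_nth flip: fps_of_nat) simp
    then have "of_nat j * (fps_deriv R * \<phi> ^ Suc j) $ j = 0"
      by (simp flip: fps_of_nat del: power_Suc)
    with Suc show ?thesis by (simp del: of_nat_Suc power_Suc)
  qed
qed

lemma fps_power_mult_deriv_power_nth:
  fixes R \<phi> :: "'a::field_char_0 fps"
  assumes R\<phi>: "R * \<phi> = fps_X" and \<phi>0: "\<phi> $ 0 \<noteq> 0" and "i \<le> k"
  shows "(R ^ i * (fps_deriv R * \<phi> ^ Suc k)) $ k = (if i = k then 1 else 0)"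
proof -
  have "\<phi> ^ Suc k = \<phi> ^ i * \<phi> ^ Suc (k - i)"
    using \<open>i \<le> k\<close> by (simp flip: power_add)
  then have "R ^ i * (fps_deriv R * \<phi> ^ Suc k) = (R * \<phi>) ^ i * (fps_deriv R * \<phi> ^ Suc (k - i))"
    unfolding power_mult_distrib by (simp only: mult_ac)
  then have eq: "R ^ i * (fps_deriv R * \<phi> ^ Suc k) = fps_X ^ i * (fps_deriv R * \<phi> ^ Suc (k - i))"
    unfolding R\<phi> .
  show ?thesis
    unfolding eq fps_X_power_mult_nth
    using \<open>i \<le> k\<close> fps_residue_deriv_div_power[OF R\<phi> \<phi>0, of "k - i"] by auto
qed

lemma fps_lagrange_buermann:
  fixes R \<phi> G H :: "'a::field_char_0 fps"
  assumes R\<phi>: "R * \<phi> = fps_X" and \<phi>0: "\<phi> $ 0 \<noteq> 0" and GR: "G oo R = fps_X" and "0 < m"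
  shows "of_nat m * (H oo G) $ m = (fps_deriv H * \<phi> ^ m) $ (m - 1)"
proof -
  obtain k where m: "m = Suc k"
    using \<open>0 < m\<close> by (cases m) auto
  have R0: "R $ 0 = 0"
    using arg_cong[OF R\<phi>, of "\<lambda>f. f $ 0"] \<phi>0 by simp
  have G0: "G $ 0 = 0"
    using arg_cong[OF GR, of "\<lambda>f. f $ 0"] by simp
  define F where "F = H oo G"
  have "F oo R = H"
    using fps_compose_assoc[OF R0 G0, of H] GR by (simp add: F_def)
  then have "fps_deriv H = (fps_deriv F oo R) * fps_deriv R"
    using fps_compose_deriv[OF R0, of F] by simp
  then have "(fps_deriv H * \<phi> ^ m) $ k = ((fps_deriv F oo R) * (fps_deriv R * \<phi> ^ Suc k)) $ k"
    by (simp add: m mult.assoc)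
  also have "\<dots> = (\<Sum>i=0..k. fps_deriv F $ i * (R ^ i * (fps_deriv R * \<phi> ^ Suc k)) $ k)"
    by (rule fps_compose_mult_nth[OF R0])
  also have "\<dots> = (\<Sum>i=0..k. if i = k then fps_deriv F $ i else 0)"
    by (intro sum.cong refl) (simp add: fps_power_mult_deriv_power_nth[OF R\<phi> \<phi>0] del: power_Suc)
  also have "\<dots> = of_nat m * F $ m"
    by (simp add: m)
  finally show ?thesis
    by (simp add: F_def m)
qed

lemma fps_lagrange_inversion:
  fixes \<phi> Y H :: "'a::field_char_0 fps"
  assumes \<phi>0: "\<phi> $ 0 \<noteq> 0" and Y: "Y = fps_X * (\<phi> oo Y)" and "0 < m"
  shows "of_nat m * (H oo Y) $ m = (fps_deriv H * \<phi> ^ m) $ (m - 1)"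
proof -
  define R where "R = fps_X * inverse \<phi>"
  have R\<phi>: "R * \<phi> = fps_X"
    using \<phi>0 by (simp add: R_def mult.assoc inverse_mult_eq_1)
  have Y0: "Y $ 0 = 0"
    by (subst Y) simp
  have Y1: "Y $ 1 \<noteq> 0"
    using \<phi>0 by (subst Y) simp
  have R0: "R $ 0 = 0"
    by (simp add: R_def)
  have "R oo Y = Y * inverse (\<phi> oo Y)"
    using Y0 \<phi>0 by (simp add: R_def fps_compose_mult_distrib fps_inverse_compose)
  also have "\<dots> = fps_X"
    using \<phi>0 by (subst (1) Y) (simp add: mult.assoc inverse_mult_eq_1')
  finally have "(Y oo R) oo Y = fps_X oo Y"
    using fps_compose_assoc[OF Y0 R0, of Y] Y0 by simp
  then have "Y oo R = fps_X"
    using fps_compose_inj_right[OF Y0 Y1] by blast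
  from fps_lagrange_buermann[OF R\<phi> \<phi>0 this \<open>0 < m\<close>] show ?thesis .
qed

lemma fps_one_minus_X_power_nth:
  "((1 - fps_X :: 'a::field_char_0 fps) ^ N) $ i = (-1) ^ i * of_nat (N choose i)"
  using one_minus_const_fps_X_power[of "1::'a" N] by (simp add: fps_compose_uminus' binomial_gbinomial)

lemma fps_inverse_one_minus_X_power_nth:
  "(inverse (1 - fps_X :: 'a::field_char_0 fps) ^ N) $ k = of_nat ((N + k - 1) choose k)"
proof (cases "N = 0")
  case True
  then show ?thesis by (cases k) simp_all
next
  case False
  then show ?thesis
    using one_minus_const_fps_X_neg_power'[of N "1::'a"] by (simp add: fps_inverse_power)
qed

text \<open>At \<open>n = 0\<close> the truncated \<open>n - i - 1\<close> gives the correct constant term \<open>0 choose 0 = 1\<close>.\<close>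
lemma one_plus_X2_div_one_minus_X_power_nth:
  "((1 + fps_X ^ 2 * inverse (1 - fps_X :: 'a::field_char_0 fps)) ^ N) $ n
     = (\<Sum>i=0..n div 2. of_nat (N choose i) * of_nat ((n - i - 1) choose (n - 2 * i)))"
proof -
  define g :: "nat \<Rightarrow> 'a" where
    "g i = of_nat (N choose i) * (if 2 * i \<le> n then of_nat ((n - i - 1) choose (n - 2 * i)) else 0)" for i
  have summand: "((fps_X ^ 2 * inverse (1 - fps_X :: 'a fps)) ^ i) $ n
      = (if 2 * i \<le> n then of_nat ((n - i - 1) choose (n - 2 * i)) else 0)" for i
  proof -
    have "i + (n - 2 * i) - 1 = n - i - 1" if "2 * i \<le> n"
      using that by simp
    then show ?thesis
      by (simp add: power_mult_distrib fps_X_power_mult_nth fps_inverse_one_minus_X_power_nth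
          flip: power_mult)
  qed
  have "(1 + fps_X ^ 2 * inverse (1 - fps_X :: 'a fps)) ^ N
      = (\<Sum>i\<le>N. of_nat (N choose i) * (fps_X ^ 2 * inverse (1 - fps_X)) ^ i)"
    using binomial_ring[of "fps_X ^ 2 * inverse (1 - fps_X :: 'a fps)" 1 N] by (simp add: add.commute)
  then have "((1 + fps_X ^ 2 * inverse (1 - fps_X :: 'a fps)) ^ N) $ n = (\<Sum>i\<le>N. g i)"
    by (simp add: g_def fps_sum_nth summand flip: fps_of_nat)
  also have "\<dots> = (\<Sum>i\<le>N + n div 2. g i)"
    by (rule sum.mono_neutral_left) (auto simp: g_def)
  also have "\<dots> = (\<Sum>i=0..n div 2. of_nat (N choose i) * of_nat ((n - i - 1) choose (n - 2 * i)))"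
    by (rule sum.mono_neutral_cong_right) (auto simp: g_def)
  finally show ?thesis .
qed

section \<open>Nonnegative basketball walks\<close>

definition basketball_step :: "int \<Rightarrow> int \<Rightarrow> bool" where
  "basketball_step x y \<longleftrightarrow> y - x \<in> {-2, -1, 1, 2}"

definition nonneg_walks :: "nat \<Rightarrow> int \<Rightarrow> int \<Rightarrow> int list set" where
  "nonneg_walks m a b = {ys. length ys = Suc m \<and> hd ys = a \<and> last ys = b
      \<and> successively basketball_step ys \<and> (\<forall>y\<in>set ys. 0 \<le> y)}"

lemma successively_iff_nth:
  "successively P xs \<longleftrightarrow> (\<forall>i. Suc i < length xs \<longrightarrow> P (xs ! i) (xs ! Suc i))"
  by (induction P xs rule: successively.induct) (auto simp: All_less_Suc2)

lemma basketball_excursions_eq: "basketball_excursions n = nonneg_walks n 0 0"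
proof -
  have "ys \<in> basketball_excursions n \<longleftrightarrow> ys \<in> nonneg_walks n 0 0" if len: "length ys = Suc n"
    for ys :: "int list"
  proof -
    have "ys \<noteq> []" using len by auto
    then have "hd ys = ys ! 0" "last ys = ys ! n" by (simp_all add: hd_conv_nth last_conv_nth len)
    moreover have "(\<forall>i\<in>{1..n}. ys ! i - ys ! (i - 1) \<in> {-2, -1, 1, 2})
        \<longleftrightarrow> successively basketball_step ys"
      unfolding image_Suc_lessThan[symmetric] successively_iff_nth basketball_step_def
      by (auto simp: len)
    moreover have "(\<forall>i\<le>n. 0 \<le> ys ! i) \<longleftrightarrow> (\<forall>y\<in>set ys. 0 \<le> y)"
      by (simp add: all_set_conv_all_nth len less_Suc_eq_le)
    ultimately show ?thesis
      unfolding basketball_excursions_def nonneg_walks_def using len by auto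
  qed
  then show ?thesis
    unfolding basketball_excursions_def nonneg_walks_def by auto
qed

lemma nonneg_walks_0: "nonneg_walks 0 a b = (if a = b \<and> 0 \<le> a then {[a]} else {})"
  by (auto simp: nonneg_walks_def length_Suc_conv)

lemma hd_in_nonneg_walks: "ys \<in> nonneg_walks m a b \<Longrightarrow> hd ys = a"
  by (simp add: nonneg_walks_def)

lemma Nil_notin_nonneg_walks [simp]: "[] \<notin> nonneg_walks m a b"
  by (simp add: nonneg_walks_def)

lemma Cons_in_nonneg_walks_Suc:
  "x # zs \<in> nonneg_walks (Suc m) a b \<longleftrightarrow>
     x = a \<and> 0 \<le> a \<and> (\<exists>s\<in>{-2, -1, 1, 2}. zs \<in> nonneg_walks m (a + s) b)"
proof (cases zs)
  case Nil
  then show ?thesis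
    by (simp add: nonneg_walks_def)
next
  case (Cons z zs')
  have start: "c = z" if "zs \<in> nonneg_walks m c b" for c
    using hd_in_nonneg_walks[OF that] by (simp add: Cons)
  have "x # zs \<in> nonneg_walks (Suc m) a b \<longleftrightarrow>
      x = a \<and> 0 \<le> a \<and> basketball_step a z \<and> zs \<in> nonneg_walks m z b"
    by (auto simp: Cons nonneg_walks_def)
  moreover have "basketball_step a z \<longleftrightarrow> (\<exists>s\<in>{-2, -1, 1, 2}. z = a + s)"
    by (auto simp: basketball_step_def)
  moreover have "(\<exists>s\<in>{-2, -1, 1, 2}. z = a + s) \<and> zs \<in> nonneg_walks m z b \<longleftrightarrow>
      (\<exists>s\<in>{-2, -1, 1, 2}. zs \<in> nonneg_walks m (a + s) b)"
    using start by blast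
  ultimately show ?thesis
    by blast
qed

lemma nonneg_walks_Suc:
  "nonneg_walks (Suc m) a b =
     (if a < 0 then {} else (\<Union>s\<in>{-2, -1, 1, 2}. (#) a ` nonneg_walks m (a + s) b))"
proof (rule set_eqI)
  fix ys :: "int list"
  have Cons_in_image: "x # zs \<in> (#) a ` A \<longleftrightarrow> x = a \<and> zs \<in> A" for x zs and A :: "int list set"
    by auto
  show "ys \<in> nonneg_walks (Suc m) a b
      \<longleftrightarrow> ys \<in> (if a < 0 then {} else (\<Union>s\<in>{-2, -1, 1, 2}. (#) a ` nonneg_walks m (a + s) b))"
    by (cases ys) (auto simp only: Cons_in_nonneg_walks_Suc Cons_in_image Nil_notin_nonneg_walks
        UN_iff empty_iff image_iff if_split list.distinct)
qed

lemma finite_nonneg_walks: "finite (nonneg_walks m a b)"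
  by (induction m arbitrary: a) (simp_all add: nonneg_walks_0 nonneg_walks_Suc)

lemma rev_in_nonneg_walks:
  assumes "ys \<in> nonneg_walks m a b"
  shows "rev ys \<in> nonneg_walks m b a"
proof -
  have "successively basketball_step (rev ys) \<longleftrightarrow> successively basketball_step ys"
    unfolding successively_rev by (rule successively_cong) (auto simp: basketball_step_def)
  with assms show ?thesis
    by (auto simp: nonneg_walks_def hd_rev last_rev)
qed

definition walk_count :: "nat \<Rightarrow> int \<Rightarrow> int \<Rightarrow> nat" where
  "walk_count m a b = card (nonneg_walks m a b)"

lemma card_basketball_excursions: "card (basketball_excursions n) = walk_count n 0 0"
  by (simp add: basketball_excursions_eq walk_count_def)

lemma walk_count_0: "walk_count 0 a b = (if a = b \<and> 0 \<le> a then 1 else 0)"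
  by (simp add: walk_count_def nonneg_walks_0)

lemma walk_count_Suc:
  "walk_count (Suc m) a b = (if a < 0 then 0 else
     walk_count m (a - 2) b + walk_count m (a - 1) b + walk_count m (a + 1) b + walk_count m (a + 2) b)"
proof -
  have "card (\<Union>s\<in>{-2, -1, 1, 2}. (#) a ` nonneg_walks m (a + s) b)
      = (\<Sum>s\<in>{-2, -1, 1, 2}. walk_count m (a + s) b)"
  proof (subst card_UN_disjoint)
    show "(\<Sum>s\<in>{-2, -1, 1, 2}. card ((#) a ` nonneg_walks m (a + s) b))
        = (\<Sum>s\<in>{-2, -1, 1, 2}. walk_count m (a + s) b)"
      by (simp add: card_image walk_count_def)
  qed (auto simp: finite_nonneg_walks dest!: hd_in_nonneg_walks)
  then show ?thesis
    by (simp add: walk_count_def nonneg_walks_Suc ac_simps)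
qed

lemma walk_count_commute: "walk_count m a b = walk_count m b a"
proof -
  have le: "walk_count m a b \<le> walk_count m b a" for a b
    unfolding walk_count_def
    by (rule card_inj_on_le[of rev]) (auto simp: finite_nonneg_walks rev_in_nonneg_walks)
  show ?thesis using le[of a b] le[of b a] by simp
qed

lemma walk_count_neg_left: "a < 0 \<Longrightarrow> walk_count m a b = 0"
  by (cases m) (simp_all add: walk_count_0 walk_count_Suc)

lemma walk_count_neg_right: "b < 0 \<Longrightarrow> walk_count m a b = 0"
  by (simp add: walk_count_commute[of m a] walk_count_neg_left)

text \<open>A walk from \<open>h + 1\<close> to \<open>b + 1\<close> either never visits \<open>0\<close>, and is then a walk from \<open>h\<close>
  to \<open>b\<close> shifted up by one, or it is split at its first visit to \<open>0\<close>: a shifted walk of length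
  \<open>k\<close> from \<open>h\<close> to \<open>0\<close> or \<open>1\<close>, one step down to \<open>0\<close>, and an arbitrary walk from \<open>0\<close>.\<close>
lemma walk_count_first_passage:
  assumes "0 \<le> h"
  shows "walk_count n (h + 1) (b + 1) = walk_count n h b
    + (\<Sum>k<n. (walk_count k h 0 + walk_count k h 1) * walk_count (n - Suc k) 0 (b + 1))"
proof -
  define c where "c k g = walk_count k g 0 + walk_count k g 1" for k g
  define S where "S n g = (\<Sum>k<n. c k g * walk_count (n - Suc k) 0 (b + 1))" for n g
  have S_neg: "S n g = 0" if "g < 0" for n g
    using that by (simp add: S_def c_def walk_count_neg_left)
  have c_Suc: "c (Suc k) g = c k (g - 2) + c k (g - 1) + c k (g + 1) + c k (g + 2)" if "0 \<le> g" for k g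
    using that by (simp add: c_def walk_count_Suc)
  have S_Suc: "S (Suc n) g = c 0 g * walk_count n 0 (b + 1)
      + S n (g - 2) + S n (g - 1) + S n (g + 1) + S n (g + 2)" if "0 \<le> g" for n g
    unfolding S_def
    by (subst sum.lessThan_Suc_shift) (simp add: c_Suc[OF that] sum.distrib algebra_simps)
  have "walk_count n (g + 1) (b + 1) = walk_count n g b + S n g" if "0 \<le> g" for g
    using that
  proof (induction n arbitrary: g)
    case 0
    then show ?case by (simp add: S_def walk_count_0)
  next
    case (Suc n)
    have IH: "walk_count n (g' + 1) (b + 1) = walk_count n g' b + S n g'" if "0 \<le> g'" for g'
      using Suc.IH that .
    have "walk_count (Suc n) (g + 1) (b + 1) = walk_count n (g - 1) (b + 1) + walk_count n g (b + 1)
        + walk_count n (g + 2) (b + 1) + walk_count n (g + 3) (b + 1)"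
      using Suc.prems by (simp add: walk_count_Suc add.assoc)
    also have "walk_count n (g + 2) (b + 1) = walk_count n (g + 1) b + S n (g + 1)"
      using IH[of "g + 1"] Suc.prems by (simp add: add.assoc)
    also have "walk_count n (g + 3) (b + 1) = walk_count n (g + 2) b + S n (g + 2)"
      using IH[of "g + 2"] Suc.prems by (simp add: add.assoc)
    also have "walk_count n (g - 1) (b + 1) + walk_count n g (b + 1)
        = walk_count n (g - 2) b + S n (g - 2) + walk_count n (g - 1) b + S n (g - 1)
          + c 0 g * walk_count n 0 (b + 1)"
    proof -
      consider "g = 0" | "g = 1" | "2 \<le> g" using Suc.prems by linarith
      then show ?thesis
      proof cases
        case 1
        then show ?thesis by (simp add: c_def walk_count_0 walk_count_neg_left S_neg)
      next
        case 2
        then show ?thesis using IH[of 0] by (simp add: c_def walk_count_0 walk_count_neg_left S_neg)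
      next
        case 3
        then have "c 0 g = 0" by (simp add: c_def walk_count_0)
        moreover have "walk_count n (g - 1) (b + 1) = walk_count n (g - 2) b + S n (g - 2)"
          using IH[of "g - 2"] 3 by simp
        moreover have "walk_count n g (b + 1) = walk_count n (g - 1) b + S n (g - 1)"
          using IH[of "g - 1"] 3 by simp
        ultimately show ?thesis by simp
      qed
    qed
    finally show ?case
      using Suc.prems by (simp add: walk_count_Suc S_Suc)
  qed
  with assms show ?thesis by (simp add: S_def c_def)
qed

section \<open>Generating functions\<close>

definition walk_gf :: "int \<Rightarrow> int \<Rightarrow> real fps" where
  "walk_gf a b = Abs_fps (\<lambda>n. of_nat (walk_count n a b))"

lemma walk_gf_commute: "walk_gf a b = walk_gf b a"
  by (simp add: walk_gf_def walk_count_commute[of _ a])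

lemma walk_gf_neg_right: "b < 0 \<Longrightarrow> walk_gf a b = 0"
  by (simp add: walk_gf_def walk_count_neg_right fps_eq_iff)

lemma walk_gf_0_0: "walk_gf 0 0 = 1 + fps_X * (walk_gf 1 0 + walk_gf 2 0)" (is "?L = ?R")
proof (rule fps_ext)
  fix n
  show "?L $ n = ?R $ n"
    by (cases n) (simp_all add: walk_gf_def walk_count_0 walk_count_Suc walk_count_neg_left)
qed

lemma walk_gf_first_passage:
  assumes "0 \<le> h"
  shows "walk_gf (h + 1) (b + 1) = walk_gf h b + fps_X * (walk_gf h 0 + walk_gf h 1) * walk_gf 0 (b + 1)"
    (is "_ = _ + ?P")
proof (rule fps_ext)
  fix n
  have "?P $ n
      = of_nat (\<Sum>k<n. (walk_count k h 0 + walk_count k h 1) * walk_count (n - Suc k) 0 (b + 1))"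
  proof (cases n)
    case (Suc m)
    then have "?P $ n = ((walk_gf h 0 + walk_gf h 1) * walk_gf 0 (b + 1)) $ m"
      by (simp add: mult.assoc fps_X_mult_nth)
    also have "\<dots> = of_nat (\<Sum>k<n. (walk_count k h 0 + walk_count k h 1)
        * walk_count (n - Suc k) 0 (b + 1))"
      by (simp add: Suc fps_mult_nth walk_gf_def lessThan_Suc_atMost atLeast0AtMost)
    finally show ?thesis .
  qed simp
  then show "walk_gf (h + 1) (b + 1) $ n = (walk_gf h b + ?P) $ n"
    using walk_count_first_passage[OF assms, of n b] by (simp add: walk_gf_def)
qed

definition excursion_gf :: "real fps" where
  "excursion_gf = fps_X * walk_gf 0 0"

lemma excursion_gf_nth_0 [simp]: "excursion_gf $ 0 = 0"
  by (simp add: excursion_gf_def)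

lemma excursion_gf_nth_Suc: "excursion_gf $ Suc n = of_nat (walk_count n 0 0)"
  by (simp add: excursion_gf_def walk_gf_def)

lemma excursion_gf_equation:
  "excursion_gf * (1 - excursion_gf) ^ 2 = fps_X * (1 - excursion_gf + excursion_gf ^ 2) ^ 2"
proof -
  define Y where "Y = excursion_gf"
  define E V W11 W20 where "E = walk_gf 0 0" and "V = walk_gf 0 1"
    and "W11 = walk_gf 1 1" and "W20 = walk_gf 2 0"
  have V: "V = fps_X * (E + V) * E"
    using walk_gf_first_passage[of 0 "-1"] walk_gf_commute[of 1 0]
    by (simp add: V_def E_def walk_gf_neg_right)
  have W11: "W11 = E + fps_X * (E + V) * V"
    using walk_gf_first_passage[of 0 0] by (simp add: V_def E_def W11_def)
  have W20: "W20 = fps_X * (V + W11) * E"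
    using walk_gf_first_passage[of 1 "-1"] walk_gf_commute[of 1 0]
    by (simp add: V_def E_def W11_def W20_def walk_gf_neg_right)
  have E: "E = 1 + fps_X * (V + W20)"
    using walk_gf_0_0 walk_gf_commute[of 1 0] by (simp add: V_def E_def W20_def)
  define u where "u = 1 - Y"
  have Vu: "V * u = fps_X * E ^ 2"
    using V by (simp add: u_def Y_def excursion_gf_def E_def[symmetric] algebra_simps power2_eq_square)
  have EVu: "(E + V) * u = E"
    using Vu by (simp add: u_def Y_def excursion_gf_def E_def[symmetric] algebra_simps power2_eq_square)
  have E2: "E = 1 + fps_X * V + fps_X ^ 2 * E * (E + V) * (1 + fps_X * V)"
    using E W20 W11 by (simp add: algebra_simps power2_eq_square)
  have "E * u ^ 2 = u ^ 2 + fps_X * (V * u) * u + fps_X ^ 2 * E * ((E + V) * u) * (u + fps_X * (V * u))"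
    by (subst (1) E2) (simp add: algebra_simps power2_eq_square)
  also have "\<dots> = (u + Y ^ 2) ^ 2"
    unfolding Vu EVu
    by (simp add: Y_def excursion_gf_def E_def[symmetric] algebra_simps power2_eq_square power3_eq_cube)
  finally have Eu: "E * u ^ 2 = (u + Y ^ 2) ^ 2" .
  have "Y * u ^ 2 = fps_X * (E * u ^ 2)"
    by (simp add: Y_def excursion_gf_def E_def mult.assoc)
  also have "\<dots> = fps_X * (u + Y ^ 2) ^ 2"
    by (simp only: Eu)
  finally show ?thesis
    by (simp add: Y_def u_def)
qed

lemma excursion_gf_fixpoint:
  "excursion_gf = fps_X * ((1 + fps_X ^ 2 * inverse (1 - fps_X)) ^ 2 oo excursion_gf)"
proof -
  let ?Y = excursion_gf
  define P where "P = 1 + ?Y ^ 2 * inverse (1 - ?Y)"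
  have comp: "(1 + fps_X ^ 2 * inverse (1 - fps_X)) ^ 2 oo ?Y = P ^ 2"
    by (simp add: P_def fps_compose_power[symmetric] fps_compose_add_distrib fps_compose_mult_distrib
        fps_inverse_compose fps_compose_sub_distrib)
  have "inverse (1 - ?Y) * (1 - ?Y) = 1"
    by (simp add: inverse_mult_eq_1)
  then have "P * (1 - ?Y) = 1 - ?Y + ?Y ^ 2"
    by (simp add: P_def distrib_right mult.assoc)
  then have "(fps_X * P ^ 2) * (1 - ?Y) ^ 2 = ?Y * (1 - ?Y) ^ 2"
    using excursion_gf_equation by (simp add: power_mult_distrib[symmetric] mult.assoc)
  moreover have "((1 - ?Y) ^ 2) $ 0 = 1"
    by (simp add: fps_square_nth)
  then have "(1 - ?Y) ^ 2 \<noteq> 0"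
    by auto
  ultimately show ?thesis
    using comp by simp
qed

lemma walk_count_excursion_lagrange:
  "of_nat (Suc n) * of_nat (walk_count n 0 0)
     = ((1 + fps_X ^ 2 * inverse (1 - fps_X :: real fps)) ^ (2 * n + 2)) $ n"
proof -
  let ?\<psi> = "1 + fps_X ^ 2 * inverse (1 - fps_X :: real fps)"
  have "(?\<psi> ^ 2) $ 0 \<noteq> 0"
    by (simp add: fps_square_nth)
  from fps_lagrange_inversion[OF this excursion_gf_fixpoint, of "Suc n" fps_X]
  have "of_nat (Suc n) * excursion_gf $ Suc n = ((?\<psi> ^ 2) ^ Suc n) $ n"
    by simp
  moreover have "(?\<psi> ^ 2) ^ Suc n = ?\<psi> ^ (2 * n + 2)"
    by (simp only: power_mult[symmetric] mult_Suc_right add.commute)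
  ultimately show ?thesis
    by (simp add: excursion_gf_nth_Suc)
qed

lemma ibinom_of_nat: "ibinom (int a) (int b) = of_nat (a choose b)"
  by (simp add: ibinom_def binomial_gbinomial)

lemma card_basketball_excursions_sum:
  "real (card (basketball_excursions n)) = 1 / (real n + 1) * (\<Sum>i=0..n div 2.
     ibinom (2 * int n + 2) (int i) * ibinom (int n - int i - 1) (int n - 2 * int i))"
proof -
  have "(\<Sum>i=0..n div 2. ibinom (2 * int n + 2) (int i) * ibinom (int n - int i - 1) (int n - 2 * int i))
      = (\<Sum>i=0..n div 2. of_nat ((2 * n + 2) choose i) * of_nat ((n - i - 1) choose (n - 2 * i)))"
  proof (intro sum.cong refl)
    fix i assume "i \<in> {0..n div 2}"
    then have i: "2 * i \<le> n"
      by auto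
    have "2 * int n + 2 = int (2 * n + 2)"
      by simp
    then have "ibinom (2 * int n + 2) (int i) = of_nat ((2 * n + 2) choose i)"
      by (simp only: ibinom_of_nat)
    moreover have "ibinom (int n - int i - 1) (int n - 2 * int i) = of_nat ((n - i - 1) choose (n - 2 * i))"
    proof (cases "i < n")
      case True
      then have "int n - int i - 1 = int (n - i - 1)" and "int n - 2 * int i = int (n - 2 * i)"
        using i by auto
      then show ?thesis
        by (simp only: ibinom_of_nat)
    next
      case False
      with i have "n = 0" and "i = 0"
        by auto
      then show ?thesis
        by (simp add: ibinom_def)
    qed
    ultimately show "ibinom (2 * int n + 2) (int i) * ibinom (int n - int i - 1) (int n - 2 * int i)
        = of_nat ((2 * n + 2) choose i) * of_nat ((n - i - 1) choose (n - 2 * i))"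
      by simp
  qed
  also have "\<dots> = of_nat (Suc n) * of_nat (walk_count n 0 0)"
    by (simp only: walk_count_excursion_lagrange one_plus_X2_div_one_minus_X_power_nth)
  finally show ?thesis
    by (simp add: card_basketball_excursions field_simps)
qed

section \<open>Substituting the Catalan series\<close>

definition catalan_gf :: "real fps" where
  "catalan_gf = fps_inv (fps_X - fps_X ^ 2)"

lemma catalan_gf_nth_0 [simp]: "catalan_gf $ 0 = 0"
  by (simp add: catalan_gf_def fps_inv_def)

lemma catalan_gf_compose_left: "catalan_gf oo (fps_X - fps_X ^ 2) = fps_X"
  unfolding catalan_gf_def by (rule fps_inv) (simp_all add: power2_eq_square fps_mult_nth)

lemma catalan_gf_equation: "catalan_gf - catalan_gf ^ 2 = fps_X"
proof -
  have "(fps_X - fps_X ^ 2) oo catalan_gf = fps_X"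
    unfolding catalan_gf_def by (rule fps_inv_right) (simp_all add: power2_eq_square fps_mult_nth)
  then show ?thesis
    by (simp add: fps_compose_sub_distrib fps_compose_power[symmetric])
qed

lemma catalan_gf_eq_X_mult: "catalan_gf = fps_X * inverse (1 - catalan_gf)"
proof -
  have "inverse (1 - catalan_gf) * (1 - catalan_gf) = 1"
    by (simp add: inverse_mult_eq_1)
  then have "catalan_gf = catalan_gf * (1 - catalan_gf) * inverse (1 - catalan_gf)"
    by (simp add: mult.assoc mult.commute[of "inverse _"])
  also have "catalan_gf * (1 - catalan_gf) = fps_X"
    using catalan_gf_equation by (simp add: algebra_simps power2_eq_square)
  finally show ?thesis .
qed

lemma catalan_gf_power_nth:
  "of_nat (Suc j + k) * (catalan_gf ^ Suc j) $ (Suc j + k) = of_nat (Suc j) * of_nat ((j + 2 * k) choose k)"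
proof -
  have "catalan_gf = fps_X * (inverse (1 - fps_X) oo catalan_gf)"
    by (subst catalan_gf_eq_X_mult) (simp add: fps_inverse_compose fps_compose_sub_distrib)
  from fps_lagrange_inversion[OF _ this, of "Suc j + k" "fps_X ^ Suc j"]
  have "of_nat (Suc j + k) * (catalan_gf ^ Suc j) $ (Suc j + k)
      = (fps_deriv (fps_X ^ Suc j) * inverse (1 - fps_X) ^ (Suc j + k)) $ (j + k)"
    by (simp add: fps_compose_power[symmetric] del: power_Suc)
  also have "\<dots> = of_nat (Suc j) * (fps_X ^ j * inverse (1 - fps_X) ^ (Suc j + k)) $ (j + k)"
    by (simp add: fps_deriv_power mult.assoc flip: fps_of_nat del: power_Suc)
  also have "\<dots> = of_nat (Suc j) * of_nat ((j + 2 * k) choose k)"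
    using fps_inverse_one_minus_X_power_nth[where 'a=real, of "Suc j + k" k]
    by (simp add: fps_X_power_mult_nth mult_2 add.assoc del: power_Suc)
  finally show ?thesis .
qed

lemma catalan_gf_deriv_mult_power_nth:
  "(fps_deriv catalan_gf * inverse (1 - catalan_gf) ^ j) $ k = of_nat ((j + 2 * k) choose k)"
proof -
  have "catalan_gf ^ j = fps_X ^ j * inverse (1 - catalan_gf) ^ j"
    by (simp only: power_mult_distrib[symmetric] catalan_gf_eq_X_mult[symmetric])
  then have "fps_deriv (catalan_gf ^ Suc j)
      = of_nat (Suc j) * (fps_X ^ j * (fps_deriv catalan_gf * inverse (1 - catalan_gf) ^ j))"
    by (simp only: fps_deriv_power diff_Suc_1 fps_of_nat mult_ac)
  then have "of_nat (Suc j) * (fps_deriv catalan_gf * inverse (1 - catalan_gf) ^ j) $ k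
      = fps_deriv (catalan_gf ^ Suc j) $ (j + k)"
    by (simp add: fps_X_power_mult_nth flip: fps_of_nat del: power_Suc)
  also have "\<dots> = of_nat (Suc j + k) * (catalan_gf ^ Suc j) $ (Suc j + k)"
    by (simp del: power_Suc)
  also have "\<dots> = of_nat (Suc j) * of_nat ((j + 2 * k) choose k)"
    by (rule catalan_gf_power_nth)
  finally show ?thesis
    by (simp del: of_nat_Suc)
qed

lemma catalan_gf_compose_excursion:
  "catalan_gf oo (excursion_gf - excursion_gf ^ 2) = excursion_gf"
proof -
  have "(fps_X - fps_X ^ 2 :: real fps) $ 0 = 0"
    by simp
  then have "catalan_gf oo ((fps_X - fps_X ^ 2) oo excursion_gf) = excursion_gf"
    by (simp add: fps_compose_assoc catalan_gf_compose_left)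
  then show ?thesis
    by (simp add: fps_compose_sub_distrib fps_compose_power[symmetric])
qed

lemma excursion_gf_catalan_fixpoint:
  "excursion_gf - excursion_gf ^ 2
     = fps_X * ((1 - fps_X) ^ 2 * inverse (1 - catalan_gf) oo (excursion_gf - excursion_gf ^ 2))"
proof -
  let ?Y = excursion_gf and ?Z = "excursion_gf - excursion_gf ^ 2"
  have "?Z $ 0 = 0"
    by (simp add: fps_square_nth)
  then have "(1 - fps_X) ^ 2 * inverse (1 - catalan_gf) oo ?Z = (1 - ?Z) ^ 2 * inverse (1 - ?Y)"
    by (simp add: fps_compose_mult_distrib fps_compose_power[symmetric] fps_compose_sub_distrib
        fps_inverse_compose catalan_gf_compose_excursion)
  also have "1 - ?Z = 1 - ?Y + ?Y ^ 2"
    by simp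
  finally have comp:
    "(1 - fps_X) ^ 2 * inverse (1 - catalan_gf) oo ?Z = (1 - ?Y + ?Y ^ 2) ^ 2 * inverse (1 - ?Y)" .
  have Zu: "?Z * (1 - ?Y) = fps_X * (1 - ?Y + ?Y ^ 2) ^ 2"
    using excursion_gf_equation by (simp add: power2_eq_square algebra_simps)
  have "?Z = ?Z * ((1 - ?Y) * inverse (1 - ?Y))"
    by (simp add: inverse_mult_eq_1')
  also have "\<dots> = fps_X * ((1 - ?Y + ?Y ^ 2) ^ 2 * inverse (1 - ?Y))"
    by (simp only: mult.assoc[symmetric] Zu)
  finally have "?Z = fps_X * ((1 - ?Y + ?Y ^ 2) ^ 2 * inverse (1 - ?Y))" .
  with comp show ?thesis
    by simp
qed

lemma walk_count_excursion_lagrange_catalan: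
  "of_nat (Suc n) * of_nat (walk_count n 0 0)
     = ((1 - fps_X) ^ (2 * n + 2) * (fps_deriv catalan_gf * inverse (1 - catalan_gf) ^ Suc n)) $ n"
proof -
  let ?\<phi> = "(1 - fps_X) ^ 2 * inverse (1 - catalan_gf)"
  have pw: "((1 - fps_X) ^ 2) ^ Suc n = (1 - fps_X :: real fps) ^ (2 * n + 2)"
    by (simp only: power_mult[symmetric] mult_Suc_right add.commute)
  have "?\<phi> $ 0 \<noteq> 0"
    by (simp add: fps_square_nth)
  from fps_lagrange_inversion[OF this excursion_gf_catalan_fixpoint, of "Suc n" catalan_gf]
  have "of_nat (Suc n) * excursion_gf $ Suc n = (fps_deriv catalan_gf * ?\<phi> ^ Suc n) $ n"
    by (simp only: catalan_gf_compose_excursion diff_Suc_1)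
  also have "fps_deriv catalan_gf * ?\<phi> ^ Suc n
      = (1 - fps_X) ^ (2 * n + 2) * (fps_deriv catalan_gf * inverse (1 - catalan_gf) ^ Suc n)"
    by (simp only: power_mult_distrib pw mult.left_commute)
  finally show ?thesis
    by (simp only: excursion_gf_nth_Suc)
qed

lemma card_basketball_excursions_alternating_sum:
  "real (card (basketball_excursions n)) = 1 / (real n + 1) * (\<Sum>k=0..n. (-1) ^ (n + k)
     * ibinom (2 * int n + 2) (int n - int k) * ibinom (int n + 2 * int k + 1) (int k))"
proof -
  have "(\<Sum>k=0..n. (-1) ^ (n + k)
        * ibinom (2 * int n + 2) (int n - int k) * ibinom (int n + 2 * int k + 1) (int k))
      = (\<Sum>k=0..n. (-1) ^ (n - k) * of_nat ((2 * n + 2) choose (n - k))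
          * of_nat ((Suc n + 2 * k) choose k))"
  proof (intro sum.cong refl)
    fix k assume "k \<in> {0..n}"
    then have "n + k = (n - k) + 2 * k" and "int n - int k = int (n - k)"
      by auto
    moreover have "2 * int n + 2 = int (2 * n + 2)" and "int n + 2 * int k + 1 = int (Suc n + 2 * k)"
      by simp_all
    ultimately show "(-1) ^ (n + k) * ibinom (2 * int n + 2) (int n - int k)
          * ibinom (int n + 2 * int k + 1) (int k)
        = (-1) ^ (n - k) * of_nat ((2 * n + 2) choose (n - k)) * of_nat ((Suc n + 2 * k) choose k)"
      by (simp only: ibinom_of_nat power_add power_mult) simp
  qed
  also have "\<dots> = (\<Sum>j=0..n. (-1) ^ j * of_nat ((2 * n + 2) choose j)
      * of_nat ((Suc n + 2 * (n - j)) choose (n - j)))"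
    by (subst sum.atLeastAtMost_rev) (rule sum.cong, simp_all)
  also have "\<dots> = of_nat (Suc n) * of_nat (walk_count n 0 0)"
    by (simp only: walk_count_excursion_lagrange_catalan fps_mult_nth[of "(1 - fps_X) ^ (2 * n + 2)"]
        fps_one_minus_X_power_nth catalan_gf_deriv_mult_power_nth mult.assoc)
  finally show ?thesis
    by (simp add: card_basketball_excursions field_simps)
qed

theorem proposition3p7:
  fixes n :: nat
  shows "real (card (basketball_excursions n))
           = 1 / (real n + 1) * (\<Sum>k=0..n. (-1) ^ (n + k)
               * ibinom (2 * int n + 2) (int n - int k) * ibinom (int n + 2 * int k + 1) (int k))
       \<and> real (card (basketball_excursions n))
           = 1 / (real n + 1) * (\<Sum>i=0..n div 2.
               ibinom (2 * int n + 2) (int i) * ibinom (int n - int i - 1) (int n - 2 * int i))"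
  using card_basketball_excursions_alternating_sum card_basketball_excursions_sum by blast

end
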